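(* For positive integers $b,n$ and nonnegative integers $c$ and $k\le n$, $$\Psi_n(k,1,b,c)=\Psi_{n-1}(k,c+1,b,c).$$
   Context: All constant terms are taken with $\operatorname{CT}_x=\operatorname{CT}_{x_n}\cdots\operatorname{CT}_{x_1}$ (iterated constant-term extraction), where $(1-x_i)^{-b}$ and $x_i/(1-x_i)$ are expanded as power series in $x_i$, and for $i<j$, $(x_j-x_i)^{-c}=x_j^{-c}(1-x_i/x_j)^{-c}$ is expanded as a power series in $x_i/x_j$. $$\Psi_n(k,a,b,c):=\operatorname{CT}_x[t^k]\prod_{i=1}^n(1-x_i)^{-b}x_i^{-a+1}\Big(1+t\frac{x_i}{1-x_i}\Big)\prod_{1\le i<j\le n}(x_j-x_i)^{-c},$$ with $[t^k]$ denoting the coefficient of $t^k$; for $n=0$ the empty product is $1$, so $\Psi_0(k,a,b,c)$ is $1$ if $k=0$ and $0$ otherwise. *)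

theory Defs
  imports Main
begin

(* Psi_n(k,a,b,c) is the iterated constant term of an iterated Laurent series.
   Variables are indexed 0..n-1 (x_i here is x_{i+1} of the paper).
   A term of the full expansion is determined by:
     S    : the set of i contributing the factor t*x_i/(1-x_i)   (|S| = k, from [t^k])
     p i  : exponent taken from (1-x_i)^(-b) = sum_p binom(b+p-1,p) x_i^p
     q i  : exponent taken from x_i/(1-x_i) = sum_{q>=1} x_i^q  (q i = 0 if i notin S)
     m i j: (i<j) exponent taken from (1-x_i/x_j)^(-c) = sum_m binom(c+m-1,m) (x_i/x_j)^m
   Together with x_i^(1-a) and x_j^(-c) for each i<j, the exponent of x_i is
     1 - a + p i + q i + sum_{j>i} m i j - sum_{j<i} m j i - c*i.
   The iterated constant term is the sum of the coefficients of all terms whose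
   exponents all vanish (this set of terms is finite). *)

definition psi_configs ::
  "nat \<Rightarrow> nat \<Rightarrow> int \<Rightarrow> nat \<Rightarrow>
     (nat set \<times> (nat \<Rightarrow> nat) \<times> (nat \<Rightarrow> nat) \<times> (nat \<Rightarrow> nat \<Rightarrow> nat)) set" where
  "psi_configs n k a c =
     {(S, p, q, m).
        S \<subseteq> {..<n} \<and> card S = k \<and>
        (\<forall>i. n \<le> i \<longrightarrow> p i = 0) \<and>
        (\<forall>i. (i \<in> S \<longrightarrow> 1 \<le> q i) \<and> (i \<notin> S \<longrightarrow> q i = 0)) \<and>
        (\<forall>i j. \<not> (i < j \<and> j < n) \<longrightarrow> m i j = 0) \<and>
        (\<forall>i<n. 1 - a + int (p i) + int (q i) + (\<Sum>j\<in>{i<..<n}. int (m i j))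
                 - (\<Sum>j<i. int (m j i)) - int c * int i = 0)}"

definition Psi :: "nat \<Rightarrow> nat \<Rightarrow> int \<Rightarrow> nat \<Rightarrow> nat \<Rightarrow> int" where
  "Psi n k a b c =
     (\<Sum>(S, p, q, m) \<in> psi_configs n k a c.
        (\<Prod>i<n. int ((b + p i - 1) choose p i)) *
        (\<Prod>i<n. \<Prod>j\<in>{i<..<n}. int ((c + m i j - 1) choose m i j)))"

end

(* With a = 1 the first variable x_1 occurs in the integrand only through power series in x_1
   with constant term 1: the factors (1 - x_1)^(-b), 1 + t x_1/(1 - x_1) and
   (x_j - x_1)^(-c) = x_j^(-c) (1 - x_1/x_j)^(-c).  Extracting the constant term in x_1
   therefore amounts to setting x_1 = 0, which leaves an extra factor x_j^(-c) for every
   remaining variable and so raises a from 1 to c + 1.  On the level of the combinatorial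
   expansion this is a bijection between configurations: those for n + 1 variables and a = 1
   are exactly the configurations for n variables and a = c + 1, shifted up by one index. *)

theory Submission
  imports Defs
begin

type_synonym psi_config =
  "nat set \<times> (nat \<Rightarrow> nat) \<times> (nat \<Rightarrow> nat) \<times> (nat \<Rightarrow> nat \<Rightarrow> nat)"

definition psi_exponent ::
  "nat \<Rightarrow> int \<Rightarrow> nat \<Rightarrow> (nat \<Rightarrow> nat) \<Rightarrow> (nat \<Rightarrow> nat) \<Rightarrow> (nat \<Rightarrow> nat \<Rightarrow> nat) \<Rightarrow> nat \<Rightarrow> int"
where
  "psi_exponent n a c p q m i =
     1 - a + int (p i) + int (q i) + (\<Sum>j\<in>{i<..<n}. int (m i j))
       - (\<Sum>j<i. int (m j i)) - int c * int i"

definition psi_weight :: "nat \<Rightarrow> nat \<Rightarrow> nat \<Rightarrow> psi_config \<Rightarrow> int" where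
  "psi_weight n b c =
     (\<lambda>(S, p, q, m).
        (\<Prod>i<n. int ((b + p i - 1) choose p i)) *
        (\<Prod>i<n. \<Prod>j\<in>{i<..<n}. int ((c + m i j - 1) choose m i j)))"

definition shift_config :: "psi_config \<Rightarrow> psi_config" where
  "shift_config =
     (\<lambda>(S, p, q, m). (Suc ` S, case_nat 0 p, case_nat 0 q,
                       case_nat (\<lambda>_. 0) (\<lambda>i. case_nat 0 (m i))))"

definition unshift_config :: "psi_config \<Rightarrow> psi_config" where
  "unshift_config =
     (\<lambda>(S, p, q, m). ((\<lambda>i. i - 1) ` S, p \<circ> Suc, q \<circ> Suc, \<lambda>i j. m (Suc i) (Suc j)))"

lemma sum_greaterThanLessThan_Suc_Suc:
  "(\<Sum>j\<in>{Suc i<..<Suc n}. f j) = (\<Sum>j\<in>{i<..<n}. f (Suc j))"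
  by (simp add: atLeastSucLessThan_greaterThanLessThan[symmetric] sum.shift_bounds_Suc_ivl
      del: sum.op_ivl_Suc)

lemma prod_greaterThanLessThan_Suc_Suc:
  "(\<Prod>j\<in>{Suc i<..<Suc n}. f j) = (\<Prod>j\<in>{i<..<n}. f (Suc j))"
  by (simp add: atLeastSucLessThan_greaterThanLessThan[symmetric] prod.shift_bounds_Suc_ivl
      del: prod.op_ivl_Suc)

lemma psi_configs_iff:
  "(S, p, q, m) \<in> psi_configs n k a c \<longleftrightarrow>
     S \<subseteq> {..<n} \<and> card S = k \<and>
     (\<forall>i. n \<le> i \<longrightarrow> p i = 0) \<and>
     (\<forall>i. (i \<in> S \<longrightarrow> 1 \<le> q i) \<and> (i \<notin> S \<longrightarrow> q i = 0)) \<and>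
     (\<forall>i j. \<not> (i < j \<and> j < n) \<longrightarrow> m i j = 0) \<and>
     (\<forall>i<n. psi_exponent n a c p q m i = 0)"
  by (simp add: psi_configs_def psi_exponent_def)

lemma Psi_eq_sum_psi_weight: "Psi n k a b c = sum (psi_weight n b c) (psi_configs n k a c)"
  by (simp add: Psi_def psi_weight_def)

lemma psi_exponent_shift_0:
  "psi_exponent (Suc n) a c (case_nat 0 p) (case_nat 0 q)
     (case_nat (\<lambda>_. 0) (\<lambda>i. case_nat 0 (m i))) 0 = 1 - a"
  by (simp add: psi_exponent_def)

lemma psi_exponent_shift_Suc:
  "psi_exponent (Suc n) a c (case_nat 0 p) (case_nat 0 q)
     (case_nat (\<lambda>_. 0) (\<lambda>i. case_nat 0 (m i))) (Suc i) =
   psi_exponent n (a + int c) c p q m i"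
  by (simp add: psi_exponent_def sum_greaterThanLessThan_Suc_Suc sum.lessThan_Suc_shift
      algebra_simps del: sum.lessThan_Suc)

lemma shift_config_in_psi_configs_iff:
  "shift_config x \<in> psi_configs (Suc n) k 1 c \<longleftrightarrow> x \<in> psi_configs n k (int c + 1) c"
proof -
  obtain S p q m where x: "x = (S, p, q, m)"
    by (cases x) auto
  have "Suc ` S \<subseteq> {..<Suc n} \<longleftrightarrow> S \<subseteq> {..<n}"
    by auto
  moreover have "card (Suc ` S) = card S"
    by (simp add: card_image)
  moreover have "(\<forall>i. Suc n \<le> i \<longrightarrow> case_nat 0 p i = 0) \<longleftrightarrow> (\<forall>i. n \<le> i \<longrightarrow> p i = 0)"
    by (auto split: nat.split)
  moreover have "(\<forall>i. (i \<in> Suc ` S \<longrightarrow> 1 \<le> case_nat 0 q i) \<and> (i \<notin> Suc ` S \<longrightarrow> case_nat 0 q i = 0))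
      \<longleftrightarrow> (\<forall>i. (i \<in> S \<longrightarrow> 1 \<le> q i) \<and> (i \<notin> S \<longrightarrow> q i = 0))"
    by (auto split: nat.split)
  moreover have "(\<forall>i j. \<not> (i < j \<and> j < Suc n) \<longrightarrow> case_nat (\<lambda>_. 0) (\<lambda>i. case_nat 0 (m i)) i j = 0)
      \<longleftrightarrow> (\<forall>i j. \<not> (i < j \<and> j < n) \<longrightarrow> m i j = 0)"
    by (auto split: nat.split)
  moreover have "(\<forall>i<Suc n. psi_exponent (Suc n) 1 c (case_nat 0 p) (case_nat 0 q)
        (case_nat (\<lambda>_. 0) (\<lambda>i. case_nat 0 (m i))) i = 0)
      \<longleftrightarrow> (\<forall>i<n. psi_exponent n (int c + 1) c p q m i = 0)"
    by (simp add: All_less_Suc2 psi_exponent_shift_0 psi_exponent_shift_Suc add.commute)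
  ultimately show ?thesis
    by (simp add: x shift_config_def psi_configs_iff)
qed

lemma Suc_image_pred_image:
  assumes "0 \<notin> S"
  shows "Suc ` (\<lambda>i. i - 1) ` S = S"
proof -
  have "Suc (i - 1) = i" if "i \<in> S" for i
    using assms that by (cases i) auto
  then show ?thesis
    by (simp add: image_image cong: image_cong)
qed

lemma unshift_shift_config: "unshift_config (shift_config x) = x"
  by (cases x) (simp add: shift_config_def unshift_config_def image_image o_def)

text \<open>For \<open>a = 1\<close> the exponent of the first variable is a sum of nonnegative terms, so only
  its constant terms survive the constant-term extraction.\<close>

lemma shift_unshift_config:
  assumes "y \<in> psi_configs (Suc n) k 1 c"
  shows "shift_config (unshift_config y) = y"
proof -
  obtain S p q m where y: "y = (S, p, q, m)"
    by (cases y) auto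
  have q_pos: "\<forall>i\<in>S. 1 \<le> q i" and m_support: "\<forall>i j. \<not> (i < j \<and> j < Suc n) \<longrightarrow> m i j = 0"
    and "psi_exponent (Suc n) 1 c p q m 0 = 0"
    using assms by (auto simp: y psi_configs_iff)
  then have "int (p 0) + int (q 0) + (\<Sum>j\<in>{0<..<Suc n}. int (m 0 j)) = 0"
    by (simp add: psi_exponent_def)
  moreover have "(\<Sum>j\<in>{0<..<Suc n}. int (m 0 j)) \<ge> 0"
    by (simp add: sum_nonneg)
  ultimately have p0: "p 0 = 0" and q0: "q 0 = 0" and "(\<Sum>j\<in>{0<..<Suc n}. int (m 0 j)) = 0"
    by linarith+
  then have "\<forall>j\<in>{0<..<Suc n}. m 0 j = 0"
    by (simp add: sum_nonneg_eq_0_iff)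
  with m_support have m0: "m 0 j = 0" and m_0: "m i 0 = 0" for i j
    by (metis greaterThanLessThan_iff, simp)
  from q_pos q0 have "0 \<notin> S"
    by auto
  then have "Suc ` (\<lambda>i. i - 1) ` S = S"
    by (rule Suc_image_pred_image)
  moreover have "case_nat 0 (p \<circ> Suc) = p" "case_nat 0 (q \<circ> Suc) = q"
    using p0 q0 by (auto simp: fun_eq_iff split: nat.split)
  moreover have "case_nat (\<lambda>_. 0) (\<lambda>i. case_nat 0 (\<lambda>j. m (Suc i) (Suc j))) = m"
    using m0 m_0 by (auto simp: fun_eq_iff split: nat.split)
  ultimately show ?thesis
    by (simp add: y shift_config_def unshift_config_def o_def)
qed

lemma bij_betw_shift_config:
  "bij_betw shift_config (psi_configs n k (int c + 1) c) (psi_configs (Suc n) k 1 c)"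
proof (rule bij_betw_byWitness[of _ unshift_config])
  show "unshift_config ` psi_configs (Suc n) k 1 c \<subseteq> psi_configs n k (int c + 1) c"
  proof (rule image_subsetI)
    fix y
    assume "y \<in> psi_configs (Suc n) k 1 c"
    then show "unshift_config y \<in> psi_configs n k (int c + 1) c"
      by (metis shift_config_in_psi_configs_iff shift_unshift_config)
  qed
qed (auto simp: unshift_shift_config shift_unshift_config shift_config_in_psi_configs_iff)

lemma psi_weight_shift_config: "psi_weight (Suc n) b c (shift_config x) = psi_weight n b c x"
  by (cases x) (simp add: psi_weight_def shift_config_def prod.lessThan_Suc_shift
      prod_greaterThanLessThan_Suc_Suc del: prod.lessThan_Suc)

theorem lemma5p7:
  fixes n k b c :: nat
  assumes "1 \<le> b" and "1 \<le> n" and "k \<le> n"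
  shows "Psi n k 1 b c = Psi (n - 1) k (int c + 1) b c"
proof -
  obtain n' where n: "n = Suc n'"
    using \<open>1 \<le> n\<close> by (cases n) auto
  have "Psi (Suc n') k 1 b c = (\<Sum>x\<in>psi_configs n' k (int c + 1) c. psi_weight (Suc n') b c (shift_config x))"
    unfolding Psi_eq_sum_psi_weight by (rule sum.reindex_bij_betw[OF bij_betw_shift_config, symmetric])
  also have "\<dots> = Psi n' k (int c + 1) b c"
    by (simp add: Psi_eq_sum_psi_weight psi_weight_shift_config)
  finally show ?thesis
    unfolding n diff_Suc_1 .
qed

end
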